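(* Let $P$ be a finite ranked poset of rank $n$ with minimum $\hat0$ and maximum $\hat1$. If $P$ has an $S$-labeling $\Lambda$, then there is a (permutation) action of the symmetric group $S_n$ on the set $\mathcal{M}(P)$ of maximal chains of $P$ satisfying $\Lambda(\pi\cdot c)=\pi\cdot\Lambda(c)$ for all $\pi\in S_n$ and $c\in\mathcal{M}(P)$, where $S_n$ acts on label sequences by permuting coordinates; and this action is local.
   Context: A labeling of $P$ is a map $\Lambda:\mathcal{M}(P)\to L^n$, $L$ a totally ordered set, written $\Lambda(c)=(\Lambda_1(c),\dots,\Lambda_n(c))$. It is an $S$-labeling if it is injective and for every maximal chain $c=(\hat0=w^0\lessdot w^1\lessdot\cdots\lessdot w^n=\hat1)$ and every $i\in[n-1]$ with $\Lambda_i(c)\neq\Lambda_{i+1}(c)$, there is a unique maximal chain $c'$ differing from $c$ only in the element of rank $i$ such that $\Lambda(c')$ is obtained from $\Lambda(c)$ by interchanging the entries in positions $i$ and $i+1$. $S_n$ acts on $L^n$ by permuting coordinates: $(\pi\cdot\lambda)_j=\lambda_{\pi^{-1}(j)}$. An action of $S_n$ on $\mathcal{M}(P)$ (or on the vector space $\mathbf{C}\mathcal{M}(P)$ with basis $\mathcal{M}(P)$) is local if for every adjacent transposition $\sigma_i=(i,i+1)$ and every maximal chain $m$, $\sigma_i(m)$ is a linear combination of maximal chains that differ from $m$ at most in the element of rank $i$. *)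

theory Defs
  imports "HOL-Combinatorics.Combinatorics"
begin

definition poset_on :: "'a set \<Rightarrow> ('a \<Rightarrow> 'a \<Rightarrow> bool) \<Rightarrow> bool" where
  "poset_on P le \<longleftrightarrow>
     (\<forall>x\<in>P. le x x) \<and>
     (\<forall>x\<in>P. \<forall>y\<in>P. le x y \<and> le y x \<longrightarrow> x = y) \<and>
     (\<forall>x\<in>P. \<forall>y\<in>P. \<forall>z\<in>P. le x y \<and> le y z \<longrightarrow> le x z)"

definition covers :: "'a set \<Rightarrow> ('a \<Rightarrow> 'a \<Rightarrow> bool) \<Rightarrow> 'a \<Rightarrow> 'a \<Rightarrow> bool" where
  "covers P le x y \<longleftrightarrow> x \<in> P \<and> y \<in> P \<and> le x y \<and> x \<noteq> y \<and>
     \<not> (\<exists>z\<in>P. le x z \<and> z \<noteq> x \<and> le z y \<and> z \<noteq> y)"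

text \<open>Maximal chains of a finite bounded poset, written as lists
  (zero = w0 covered by w1 ... covered by wk = one); the element of rank i is the i-th entry.\<close>

definition max_chains :: "'a set \<Rightarrow> ('a \<Rightarrow> 'a \<Rightarrow> bool) \<Rightarrow> 'a \<Rightarrow> 'a \<Rightarrow> 'a list set" where
  "max_chains P le zero one =
     {c. c \<noteq> [] \<and> hd c = zero \<and> last c = one \<and>
         (\<forall>i. Suc i < length c \<longrightarrow> covers P le (c ! i) (c ! Suc i))}"

definition bounded_ranked_poset ::
  "'a set \<Rightarrow> ('a \<Rightarrow> 'a \<Rightarrow> bool) \<Rightarrow> 'a \<Rightarrow> 'a \<Rightarrow> nat \<Rightarrow> bool" where
  "bounded_ranked_poset P le zero one n \<longleftrightarrow>
     finite P \<and> poset_on P le \<and> zero \<in> P \<and> one \<in> P \<and>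
     (\<forall>x\<in>P. le zero x \<and> le x one) \<and>
     (\<forall>c\<in>max_chains P le zero one. length c = Suc n)"

text \<open>Label sequences in L^n are functions nat => L, only positions 1..n matter.
  S_n acts by (pi . lambda)_j = lambda_(pi^-1 j).\<close>

definition perm_labels :: "(nat \<Rightarrow> nat) \<Rightarrow> (nat \<Rightarrow> 'l) \<Rightarrow> (nat \<Rightarrow> 'l)" where
  "perm_labels \<pi> lab = (\<lambda>j. lab (inv \<pi> j))"

definition eq_labels :: "nat \<Rightarrow> (nat \<Rightarrow> 'l) \<Rightarrow> (nat \<Rightarrow> 'l) \<Rightarrow> bool" where
  "eq_labels n lab lab2 \<longleftrightarrow> (\<forall>j\<in>{1..n}. lab j = lab2 j)"

definition differ_only_at :: "nat \<Rightarrow> 'a list \<Rightarrow> 'a list \<Rightarrow> bool" where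
  "differ_only_at i c c' \<longleftrightarrow> length c' = length c \<and> (\<forall>j<length c. j \<noteq> i \<longrightarrow> c' ! j = c ! j)"

definition S_labeling ::
  "'a set \<Rightarrow> ('a \<Rightarrow> 'a \<Rightarrow> bool) \<Rightarrow> 'a \<Rightarrow> 'a \<Rightarrow> nat \<Rightarrow> ('a list \<Rightarrow> nat \<Rightarrow> 'l::linorder) \<Rightarrow> bool" where
  "S_labeling P le zero one n \<Lambda> \<longleftrightarrow>
     (\<forall>c\<in>max_chains P le zero one. \<forall>c'\<in>max_chains P le zero one.
        eq_labels n (\<Lambda> c) (\<Lambda> c') \<longrightarrow> c = c') \<and>
     (\<forall>c\<in>max_chains P le zero one. \<forall>i. 1 \<le> i \<and> i < n \<and> \<Lambda> c i \<noteq> \<Lambda> c (Suc i) \<longrightarrow>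
        (\<exists>!c'. c' \<in> max_chains P le zero one \<and> differ_only_at i c c' \<and>
               eq_labels n (\<Lambda> c') (perm_labels (Transposition.transpose i (Suc i)) (\<Lambda> c))))"

definition Sn_action :: "'a list set \<Rightarrow> nat \<Rightarrow> ((nat \<Rightarrow> nat) \<Rightarrow> 'a list \<Rightarrow> 'a list) \<Rightarrow> bool" where
  "Sn_action M n act \<longleftrightarrow>
     (\<forall>\<pi>. \<pi> permutes {1..n} \<longrightarrow> (\<forall>c\<in>M. act \<pi> c \<in> M)) \<and>
     (\<forall>c\<in>M. act id c = c) \<and>
     (\<forall>\<pi> \<sigma>. \<pi> permutes {1..n} \<longrightarrow> \<sigma> permutes {1..n} \<longrightarrow>
        (\<forall>c\<in>M. act (\<pi> \<circ> \<sigma>) c = act \<pi> (act \<sigma> c)))"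

definition local_action :: "'a list set \<Rightarrow> nat \<Rightarrow> ((nat \<Rightarrow> nat) \<Rightarrow> 'a list \<Rightarrow> 'a list) \<Rightarrow> bool" where
  "local_action M n act \<longleftrightarrow>
     (\<forall>i. 1 \<le> i \<and> i < n \<longrightarrow>
        (\<forall>m\<in>M. differ_only_at i m (act (Transposition.transpose i (Suc i)) m)))"

end

theory Submission
  imports Defs
begin

text \<open>Call a permutation \<open>\<pi>\<close> of \<open>{1..n}\<close> realizable if \<open>\<pi> \<cdot> \<Lambda>(c)\<close> is again the label of a
  maximal chain for every maximal chain \<open>c\<close>. Realizable permutations are closed under
  composition, and the exchange axiom of an \<open>S\<close>-labeling says exactly that the adjacent
  transpositions are realizable (if \<open>\<Lambda>\<^sub>i(c) = \<Lambda>\<^sub>i\<^sub>+\<^sub>1(c)\<close>, \<open>c\<close> itself is the witness). Since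
  adjacent transpositions generate \<open>S\<^sub>n\<close>, every permutation is realizable, and by injectivity
  of \<open>\<Lambda>\<close> the chain with labels \<open>\<pi> \<cdot> \<Lambda>(c)\<close> is unique; this defines the action, and
  uniqueness makes it functorial and local.\<close>

lemma transpose_Suc_conv:
  "a < b \<Longrightarrow> Transposition.transpose a (Suc b) =
    Transposition.transpose b (Suc b) \<circ> Transposition.transpose a b \<circ> Transposition.transpose b (Suc b)"
  by (auto simp: fun_eq_iff Transposition.transpose_def)

lemma transpose_induct_adjacent:
  assumes "Q id"
    and adjacent: "\<And>i. m \<le> i \<Longrightarrow> i < n \<Longrightarrow> Q (Transposition.transpose i (Suc i))"
    and comp: "\<And>p q. Q p \<Longrightarrow> Q q \<Longrightarrow> Q (p \<circ> q)"
    and "a \<in> {m..n}" "b \<in> {m..n}"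
  shows "Q (Transposition.transpose a b)"
proof -
  have less: "Q (Transposition.transpose x (x + d + 1))" if "m \<le> x" "x + d + 1 \<le> n" for x d
    using that(2)
  proof (induction d)
    case 0
    then show ?case using adjacent that(1) by simp
  next
    case (Suc d)
    let ?b = "x + d + 1"
    have "Q (Transposition.transpose ?b (Suc ?b))" using adjacent Suc.prems that(1) by simp
    moreover have "Q (Transposition.transpose x ?b)" using Suc by simp
    ultimately have "Q (Transposition.transpose ?b (Suc ?b) \<circ> Transposition.transpose x ?b
        \<circ> Transposition.transpose ?b (Suc ?b))"
      using comp by blast
    moreover have "x + Suc d + 1 = Suc ?b" "x < ?b" by simp_all
    ultimately show ?case by (simp only: transpose_Suc_conv)
  qed
  consider "a = b" | "a < b" | "b < a" by linarith
  then show ?thesis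
  proof cases
    case 1
    then show ?thesis using \<open>Q id\<close> by simp
  next
    case 2
    then show ?thesis using less[of a "b - a - 1"] assms(4,5) by simp
  next
    case 3
    then show ?thesis using less[of b "a - b - 1"] assms(4,5) by (simp add: transpose_commute)
  qed
qed

lemma permutes_induct_adjacent:
  assumes "p permutes {m..n}"
    and "Q id"
    and "\<And>p q. Q p \<Longrightarrow> Q q \<Longrightarrow> Q (p \<circ> q)"
    and "\<And>i. m \<le> i \<Longrightarrow> i < n \<Longrightarrow> Q (Transposition.transpose i (Suc i))"
  shows "Q p"
  using assms(1) finite_atLeastAtMost
proof (induction rule: permutes_induct)
  case id
  then show ?case using assms(2) .
next
  case (swap a b p)
  then show ?case using transpose_induct_adjacent[of Q m n a b] assms(2-4) by blast
qed

lemma eq_labels_refl: "eq_labels n f f"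
  unfolding eq_labels_def by simp

lemma eq_labels_sym: "eq_labels n f g \<Longrightarrow> eq_labels n g f"
  unfolding eq_labels_def by simp

lemma eq_labels_trans: "eq_labels n f g \<Longrightarrow> eq_labels n g h \<Longrightarrow> eq_labels n f h"
  unfolding eq_labels_def by simp

lemma eq_labels_perm_labels:
  assumes "\<pi> permutes {1..n}" "eq_labels n f g"
  shows "eq_labels n (perm_labels \<pi> f) (perm_labels \<pi> g)"
  using assms permutes_in_image[OF permutes_inv[OF assms(1)]]
  unfolding eq_labels_def perm_labels_def by simp

lemma perm_labels_id [simp]: "perm_labels id f = f"
  unfolding perm_labels_def by (simp add: inv_id)

lemma perm_labels_comp:
  assumes "\<pi> permutes S" "\<sigma> permutes S"
  shows "perm_labels (\<pi> \<circ> \<sigma>) f = perm_labels \<pi> (perm_labels \<sigma> f)"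
  using o_inv_distrib[OF permutes_bij[OF assms(1)] permutes_bij[OF assms(2)]]
  unfolding perm_labels_def by simp

lemma eq_labels_perm_labels_transpose:
  "f i = f (Suc i) \<Longrightarrow> eq_labels n f (perm_labels (Transposition.transpose i (Suc i)) f)"
  unfolding eq_labels_def perm_labels_def by (auto simp: Transposition.transpose_def)

definition realizable :: "'a list set \<Rightarrow> nat \<Rightarrow> ('a list \<Rightarrow> nat \<Rightarrow> 'l) \<Rightarrow> (nat \<Rightarrow> nat) \<Rightarrow> bool" where
  "realizable M n \<Lambda> \<pi> \<longleftrightarrow> \<pi> permutes {1..n} \<and>
     (\<forall>c\<in>M. \<exists>c'\<in>M. eq_labels n (\<Lambda> c') (perm_labels \<pi> (\<Lambda> c)))"

lemma realizable_id: "realizable M n \<Lambda> id"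
  unfolding realizable_def using eq_labels_refl permutes_id by fastforce

lemma realizable_comp:
  assumes \<pi>: "realizable M n \<Lambda> \<pi>" and \<sigma>: "realizable M n \<Lambda> \<sigma>"
  shows "realizable M n \<Lambda> (\<pi> \<circ> \<sigma>)"
  unfolding realizable_def
proof (intro conjI ballI)
  have perms: "\<pi> permutes {1..n}" "\<sigma> permutes {1..n}"
    using \<pi> \<sigma> unfolding realizable_def by simp_all
  then show "\<pi> \<circ> \<sigma> permutes {1..n}" by (rule permutes_compose[rotated])
  fix c assume "c \<in> M"
  then obtain c1 where c1: "c1 \<in> M" "eq_labels n (\<Lambda> c1) (perm_labels \<sigma> (\<Lambda> c))"
    using \<sigma> unfolding realizable_def by blast
  then obtain c2 where c2: "c2 \<in> M" "eq_labels n (\<Lambda> c2) (perm_labels \<pi> (\<Lambda> c1))"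
    using \<pi> unfolding realizable_def by blast
  have "eq_labels n (perm_labels \<pi> (\<Lambda> c1)) (perm_labels (\<pi> \<circ> \<sigma>) (\<Lambda> c))"
    using eq_labels_perm_labels[OF perms(1) c1(2)] unfolding perm_labels_comp[OF perms] .
  with c2 show "\<exists>c'\<in>M. eq_labels n (\<Lambda> c') (perm_labels (\<pi> \<circ> \<sigma>) (\<Lambda> c))"
    using eq_labels_trans by blast
qed

lemma S_labeling_inj:
  "S_labeling P le zero one n \<Lambda> \<Longrightarrow> c \<in> max_chains P le zero one \<Longrightarrow>
    c' \<in> max_chains P le zero one \<Longrightarrow> eq_labels n (\<Lambda> c) (\<Lambda> c') \<Longrightarrow> c = c'"
  unfolding S_labeling_def by blast

lemma S_labeling_exchange:
  assumes "S_labeling P le zero one n \<Lambda>" "c \<in> max_chains P le zero one" "1 \<le> i" "i < n"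
  obtains c' where "c' \<in> max_chains P le zero one" "differ_only_at i c c'"
    "eq_labels n (\<Lambda> c') (perm_labels (Transposition.transpose i (Suc i)) (\<Lambda> c))"
proof (cases "\<Lambda> c i = \<Lambda> c (Suc i)")
  case True
  show ?thesis
    by (rule that[of c])
      (use assms(2) True eq_labels_perm_labels_transpose in \<open>simp_all add: differ_only_at_def\<close>)
next
  case False
  then show ?thesis using that assms unfolding S_labeling_def by blast
qed

lemma realizable_permutes:
  assumes S: "S_labeling P le zero one n \<Lambda>" and "\<pi> permutes {1..n}"
  shows "realizable (max_chains P le zero one) n \<Lambda> \<pi>"
  using assms(2) realizable_id realizable_comp
proof (rule permutes_induct_adjacent)
  fix i assume i: "1 \<le> i" "i < n"
  then have "Transposition.transpose i (Suc i) permutes {1..n}"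
    by (intro permutes_swap_id) auto
  moreover have "\<exists>c'\<in>max_chains P le zero one.
      eq_labels n (\<Lambda> c') (perm_labels (Transposition.transpose i (Suc i)) (\<Lambda> c))"
    if "c \<in> max_chains P le zero one" for c
    using S_labeling_exchange[OF S that i] by blast
  ultimately show "realizable (max_chains P le zero one) n \<Lambda> (Transposition.transpose i (Suc i))"
    unfolding realizable_def by blast
qed

definition chain_action ::
  "'a list set \<Rightarrow> nat \<Rightarrow> ('a list \<Rightarrow> nat \<Rightarrow> 'l) \<Rightarrow> (nat \<Rightarrow> nat) \<Rightarrow> 'a list \<Rightarrow> 'a list" where
  "chain_action M n \<Lambda> \<pi> c = (THE c'. c' \<in> M \<and> eq_labels n (\<Lambda> c') (perm_labels \<pi> (\<Lambda> c)))"

context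
  fixes P :: "'a set" and le :: "'a \<Rightarrow> 'a \<Rightarrow> bool" and zero one :: 'a and n :: nat
    and \<Lambda> :: "'a list \<Rightarrow> nat \<Rightarrow> 'l::linorder"
  assumes S: "S_labeling P le zero one n \<Lambda>"
begin

lemma chain_action_eqI:
  assumes "c' \<in> max_chains P le zero one" "eq_labels n (\<Lambda> c') (perm_labels \<pi> (\<Lambda> c))"
  shows "chain_action (max_chains P le zero one) n \<Lambda> \<pi> c = c'"
  unfolding chain_action_def
  using assms S_labeling_inj[OF S] eq_labels_sym eq_labels_trans by (blast intro: the_equality)

lemma chain_action_realizes:
  assumes "\<pi> permutes {1..n}" "c \<in> max_chains P le zero one"
  shows "chain_action (max_chains P le zero one) n \<Lambda> \<pi> c \<in> max_chains P le zero one"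
    and "eq_labels n (\<Lambda> (chain_action (max_chains P le zero one) n \<Lambda> \<pi> c)) (perm_labels \<pi> (\<Lambda> c))"
proof -
  obtain c' where "c' \<in> max_chains P le zero one" "eq_labels n (\<Lambda> c') (perm_labels \<pi> (\<Lambda> c))"
    using realizable_permutes[OF S assms(1)] assms(2) unfolding realizable_def by blast
  with chain_action_eqI
  show "chain_action (max_chains P le zero one) n \<Lambda> \<pi> c \<in> max_chains P le zero one"
    and "eq_labels n (\<Lambda> (chain_action (max_chains P le zero one) n \<Lambda> \<pi> c)) (perm_labels \<pi> (\<Lambda> c))"
    by simp_all
qed

lemma chain_action_id:
  "c \<in> max_chains P le zero one \<Longrightarrow> chain_action (max_chains P le zero one) n \<Lambda> id c = c"
  by (intro chain_action_eqI) (simp_all add: eq_labels_refl)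

lemma chain_action_comp:
  assumes perms: "\<pi> permutes {1..n}" "\<sigma> permutes {1..n}" and c: "c \<in> max_chains P le zero one"
  shows "chain_action (max_chains P le zero one) n \<Lambda> (\<pi> \<circ> \<sigma>) c =
    chain_action (max_chains P le zero one) n \<Lambda> \<pi> (chain_action (max_chains P le zero one) n \<Lambda> \<sigma> c)"
    (is "?act (\<pi> \<circ> \<sigma>) c = ?act \<pi> (?act \<sigma> c)")
proof (rule chain_action_eqI)
  have \<sigma>c: "?act \<sigma> c \<in> max_chains P le zero one"
    "eq_labels n (\<Lambda> (?act \<sigma> c)) (perm_labels \<sigma> (\<Lambda> c))"
    using chain_action_realizes[OF perms(2) c] by simp_all
  then show "?act \<pi> (?act \<sigma> c) \<in> max_chains P le zero one"
    using chain_action_realizes(1)[OF perms(1)] by simp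
  have "eq_labels n (\<Lambda> (?act \<pi> (?act \<sigma> c))) (perm_labels \<pi> (\<Lambda> (?act \<sigma> c)))"
    using chain_action_realizes(2)[OF perms(1) \<sigma>c(1)] .
  moreover have "eq_labels n (perm_labels \<pi> (\<Lambda> (?act \<sigma> c))) (perm_labels (\<pi> \<circ> \<sigma>) (\<Lambda> c))"
    using eq_labels_perm_labels[OF perms(1) \<sigma>c(2)] unfolding perm_labels_comp[OF perms] .
  ultimately show "eq_labels n (\<Lambda> (?act \<pi> (?act \<sigma> c))) (perm_labels (\<pi> \<circ> \<sigma>) (\<Lambda> c))"
    by (rule eq_labels_trans)
qed

lemma Sn_action_chain_action:
  "Sn_action (max_chains P le zero one) n (chain_action (max_chains P le zero one) n \<Lambda>)"
  unfolding Sn_action_def using chain_action_realizes(1) chain_action_id chain_action_comp by blast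

lemma local_action_chain_action:
  "local_action (max_chains P le zero one) n (chain_action (max_chains P le zero one) n \<Lambda>)"
  unfolding local_action_def
proof (intro allI impI ballI)
  fix i c assume "1 \<le> i \<and> i < n" "c \<in> max_chains P le zero one"
  then obtain c' where "c' \<in> max_chains P le zero one" "differ_only_at i c c'"
    "eq_labels n (\<Lambda> c') (perm_labels (Transposition.transpose i (Suc i)) (\<Lambda> c))"
    using S_labeling_exchange[OF S] by blast
  then show "differ_only_at i c
      (chain_action (max_chains P le zero one) n \<Lambda> (Transposition.transpose i (Suc i)) c)"
    using chain_action_eqI by simp
qed

end

theorem theorem4p1:
  fixes P :: "'a set" and le :: "'a \<Rightarrow> 'a \<Rightarrow> bool" and zero one :: 'a and n :: nat
    and \<Lambda> :: "'a list \<Rightarrow> nat \<Rightarrow> 'l::linorder"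
  assumes "bounded_ranked_poset P le zero one n"
    and "S_labeling P le zero one n \<Lambda>"
  shows "\<exists>act. Sn_action (max_chains P le zero one) n act \<and>
           (\<forall>\<pi> c. \<pi> permutes {1..n} \<longrightarrow> c \<in> max_chains P le zero one \<longrightarrow>
              eq_labels n (\<Lambda> (act \<pi> c)) (perm_labels \<pi> (\<Lambda> c))) \<and>
           local_action (max_chains P le zero one) n act"
  using Sn_action_chain_action[OF assms(2)] local_action_chain_action[OF assms(2)]
    chain_action_realizes(2)[OF assms(2)]
  by blast

end
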